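(* Let $f(x)=\sqrt{1-x^2}$ on $[-1,1]$. For each integer $n\geq 0$ let $p_n^{L_1}$ be the best $L_1$ polynomial approximant of degree $\leq n$ to $f$ and $p_n^{L_\infty}$ the best $L_\infty$ (minimax) polynomial approximant of degree $\leq n$ to $f$, and let \[ \Omega_n=\Big\{x\in[-1,1]:|f(x)-p_n^{L_1}(x)|\geq\tfrac12\|f-p_n^{L_\infty}\|_\infty\Big\}. \] Then $|\Omega_n|=\mathcal{O}(n^{-2}\log n)$ as $n\to\infty$, where $|\cdot|$ denotes Lebesgue measure.
   Context: $p_n^{L_1}$ minimizes $\int_{-1}^1|f(x)-q(x)|\,dx$ and $p_n^{L_\infty}$ minimizes $\max_{x\in[-1,1]}|f(x)-q(x)|$ over real polynomials $q$ of degree $\leq n$; $\|g\|_\infty=\max_{x\in[-1,1]}|g(x)|$. *)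

theory Defs
  imports "HOL-Analysis.Analysis" "HOL-Computational_Algebra.Polynomial" "HOL-Library.Landau_Symbols"
begin

definition f_circ :: "real \<Rightarrow> real" where
  "f_circ x = sqrt (1 - x\<^sup>2)"

definition L1_dist :: "(real \<Rightarrow> real) \<Rightarrow> real poly \<Rightarrow> real" where
  "L1_dist f q = integral {-1..1} (\<lambda>x. \<bar>f x - poly q x\<bar>)"

definition sup_dist :: "(real \<Rightarrow> real) \<Rightarrow> real poly \<Rightarrow> real" where
  "sup_dist f q = (SUP x\<in>{-1..1}. \<bar>f x - poly q x\<bar>)"

definition is_best_L1 :: "(real \<Rightarrow> real) \<Rightarrow> nat \<Rightarrow> real poly \<Rightarrow> bool" where
  "is_best_L1 f n p \<longleftrightarrow> degree p \<le> n \<and> (\<forall>q. degree q \<le> n \<longrightarrow> L1_dist f p \<le> L1_dist f q)"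

definition is_best_Linf :: "(real \<Rightarrow> real) \<Rightarrow> nat \<Rightarrow> real poly \<Rightarrow> bool" where
  "is_best_Linf f n p \<longleftrightarrow> degree p \<le> n \<and> (\<forall>q. degree q \<le> n \<longrightarrow> sup_dist f p \<le> sup_dist f q)"

end

theory Submission
  imports Defs
begin

text \<open>
  Substituting x = cos t turns f into sin t on [0, pi]. The kernel
  K(t) = cos((4n+2)t) |sum_{j<=n} e^(2ijt)|^2 has only even frequencies, all in [2n+2, 6n+2], so
  it is orthogonal on [0, pi] to p(cos t) for every polynomial p of degree <= n, while its
  integral against sin t is at most -2(n+1)^2/(6n+2)^2. Since |K| is bounded by a Fejer kernel of
  integral pi(n+1), every such p has uniform error at least 2(n+1)/(pi(6n+2)^2), of order 1/n.

  The best L1 error is O(n^-3 log n). Put y = sqrt(1 - x^2) and let H be the odd primitive of the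
  squared Fejer kernel u |-> (sin(M arcsin u)/u)^4, a polynomial in u^2. The polynomial
  y H(y)/H(1), of degree 4M+2 in x, has error y (H(1) - H(y))/H(1) = O(1/(M^3 y^2 + M)) because
  H(1) >= M^3/32 and H(1) - H(y) <= 1/(3 y^3); integrating over [-1, 1] gives O(M^-3 log M).
  Markov's inequality bounds the measure of Omega_n by twice the L1 error over the uniform error.
\<close>

section \<open>Trigonometric integrals over [0, pi]\<close>

lemma fundamental_theorem_of_calculus_real:
  fixes F f :: "real \<Rightarrow> real"
  assumes "a \<le> b" and "\<And>x. x \<in> {a..b} \<Longrightarrow> (F has_real_derivative f x) (at x)"
  shows "(f has_integral (F b - F a)) {a..b}"
  using assms(2) by (intro fundamental_theorem_of_calculus[OF assms(1)])
    (simp add: has_real_derivative_iff_has_vector_derivative[symmetric] has_field_derivative_at_within)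

lemma has_integral_cos_int_multiple:
  assumes "d \<noteq> 0"
  shows "((\<lambda>t. cos (real_of_int d * t)) has_integral 0) {0..pi}"
proof -
  have "((\<lambda>t. cos (real_of_int d * t)) has_integral
          ((\<lambda>t. sin (real_of_int d * t) / real_of_int d) pi
           - (\<lambda>t. sin (real_of_int d * t) / real_of_int d) 0)) {0..pi}"
    using assms pi_ge_zero
    by (intro fundamental_theorem_of_calculus_real) (auto intro!: derivative_eq_intros)
  moreover have "sin (real_of_int d * pi) = 0"
    by (metis mult.commute sin_npi_int)
  ultimately show ?thesis by simp
qed

lemma has_integral_cos_power_cos_multiple:
  assumes "i < k"
  shows "((\<lambda>t. cos t ^ i * cos (real k * t)) has_integral 0) {0..pi}"
  using assms
proof (induction i arbitrary: k)
  case 0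
  then show ?case using has_integral_cos_int_multiple[of "int k"] by simp
next
  case (Suc i)
  have eq: "cos t ^ Suc i * cos (real k * t)
      = (cos t ^ i * cos (real (k - 1) * t) + cos t ^ i * cos (real (k + 1) * t)) / 2" for t
  proof -
    have "real (k - 1) * t = real k * t - t" "real (k + 1) * t = real k * t + t"
      using Suc.prems by (simp_all add: of_nat_diff algebra_simps)
    then have prod: "cos (real k * t) * cos t = (cos (real (k - 1) * t) + cos (real (k + 1) * t)) / 2"
      by (simp add: cos_times_cos)
    have "cos t ^ Suc i * cos (real k * t) = cos t ^ i * (cos (real k * t) * cos t)"
      by (simp add: ac_simps)
    also have "\<dots> = cos t ^ i * ((cos (real (k - 1) * t) + cos (real (k + 1) * t)) / 2)"
      by (simp only: prod)
    finally show ?thesis by (simp add: distrib_left add_divide_distrib)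
  qed
  have "((\<lambda>t. (cos t ^ i * cos (real (k - 1) * t) + cos t ^ i * cos (real (k + 1) * t)) / 2)
      has_integral (0 + 0) / 2) {0..pi}"
    using Suc.prems by (intro has_integral_divide has_integral_add Suc.IH) auto
  then show ?case unfolding eq by simp
qed

lemma has_integral_poly_cos_cos_multiple:
  fixes p :: "real poly"
  assumes "degree p < k"
  shows "((\<lambda>t. poly p (cos t) * cos (real k * t)) has_integral 0) {0..pi}"
proof -
  have "((\<lambda>t. \<Sum>i\<le>degree p. coeff p i * (cos t ^ i * cos (real k * t)))
      has_integral (\<Sum>i\<le>degree p. coeff p i * 0)) {0..pi}"
    using assms
    by (intro has_integral_sum has_integral_mult_right has_integral_cos_power_cos_multiple) auto
  then show ?thesis
    by (simp add: poly_altdef sum_distrib_right mult.assoc)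
qed

lemma has_integral_sin_cos_even_multiple:
  assumes "even k"
  shows "((\<lambda>t. sin t * cos (real k * t)) has_integral (-2 / ((real k)\<^sup>2 - 1))) {0..pi}"
proof -
  define G where
    "G t = (cos t * cos (real k * t) + real k * sin t * sin (real k * t)) / ((real k)\<^sup>2 - 1)" for t
  have k1: "(real k)\<^sup>2 - 1 \<noteq> 0"
  proof (cases "k = 0")
    case False
    then have "2 \<le> k" using assms by presburger
    then have "(real k)\<^sup>2 \<ge> 2\<^sup>2" by (intro power_mono) auto
    then show ?thesis by simp
  qed simp
  have "(G has_real_derivative sin t * cos (real k * t)) (at t)" for t
  proof -
    have "(G has_real_derivative (-sin t * cos (real k * t) - cos t * (sin (real k * t) * real k)
        + real k * cos t * sin (real k * t) + real k * sin t * (cos (real k * t) * real k))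
        / ((real k)\<^sup>2 - 1)) (at t)"
      unfolding G_def using k1 by (auto intro!: derivative_eq_intros)
    moreover have "(-sin t * cos (real k * t) - cos t * (sin (real k * t) * real k)
        + real k * cos t * sin (real k * t) + real k * sin t * (cos (real k * t) * real k))
        / ((real k)\<^sup>2 - 1) = sin t * cos (real k * t)"
      using k1 by (simp add: field_simps power2_eq_square)
    ultimately show ?thesis by simp
  qed
  then have "((\<lambda>t. sin t * cos (real k * t)) has_integral (G pi - G 0)) {0..pi}"
    using pi_ge_zero by (intro fundamental_theorem_of_calculus_real) auto
  moreover have "cos (real k * pi) = 1" using assms by simp
  then have "G pi - G 0 = -2 / ((real k)\<^sup>2 - 1)"
    unfolding G_def using k1 by (simp add: field_simps)
  ultimately show ?thesis by simp
qed

section \<open>The uniform error is at least of order 1/n\<close>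

lemma continuous_on_f_circ: "continuous_on S f_circ"
  unfolding f_circ_def by (intro continuous_intros)

lemma f_circ_cos:
  assumes "t \<in> {0..pi}"
  shows "f_circ (cos t) = sin t"
proof -
  have "f_circ (cos t) = \<bar>sin t\<bar>" unfolding f_circ_def by (simp add: sin_squared_eq[symmetric])
  then show ?thesis using sin_ge_zero assms by auto
qed

lemma abs_diff_le_sup_dist_f_circ:
  assumes "x \<in> {-1..1}"
  shows "\<bar>f_circ x - poly p x\<bar> \<le> sup_dist f_circ p"
proof -
  have "continuous_on {-1..1} (\<lambda>x. \<bar>f_circ x - poly p x\<bar>)"
    using continuous_on_f_circ by (intro continuous_intros) auto
  then have "bdd_above ((\<lambda>x. \<bar>f_circ x - poly p x\<bar>) ` {-1..1})"
    by (intro bounded_imp_bdd_above compact_imp_bounded compact_continuous_image) auto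
  then show ?thesis unfolding sup_dist_def using assms by (rule cSUP_upper2) auto
qed

definition fejer_kernel :: "nat \<Rightarrow> real \<Rightarrow> real" where
  "fejer_kernel n t = (\<Sum>j\<le>n. cos (real (2*j) * t))\<^sup>2 + (\<Sum>j\<le>n. sin (real (2*j) * t))\<^sup>2"

lemma fejer_kernel_nonneg: "0 \<le> fejer_kernel n t"
  unfolding fejer_kernel_def by simp

lemma fejer_kernel_double_sum:
  "fejer_kernel n t = (\<Sum>j\<le>n. \<Sum>l\<le>n. cos (real (2*j) * t - real (2*l) * t))"
  unfolding fejer_kernel_def by (simp add: power2_eq_square sum_product cos_diff sum.distrib)

lemma continuous_on_fejer_kernel: "continuous_on S (fejer_kernel n)"
  unfolding fejer_kernel_def by (intro continuous_intros)

lemma has_integral_fejer_kernel: "(fejer_kernel n has_integral (pi * (real n + 1))) {0..pi}"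
proof -
  have "((\<lambda>t. cos (real_of_int (2 * int j - 2 * int l) * t)) has_integral (if j = l then pi else 0))
      {0..pi}" for j l
  proof (cases "j = l")
    case True
    have "((\<lambda>t. 1) has_integral ((\<lambda>t. t) pi - (\<lambda>t. t) 0)) {0..pi}"
      using pi_ge_zero
      by (intro fundamental_theorem_of_calculus_real) (auto intro!: derivative_eq_intros)
    then show ?thesis using True by simp
  next
    case False
    then show ?thesis using has_integral_cos_int_multiple[of "2 * int j - 2 * int l"] by simp
  qed
  then have "((\<lambda>t. \<Sum>j\<le>n. \<Sum>l\<le>n. cos (real_of_int (2 * int j - 2 * int l) * t)) has_integral
      (\<Sum>j\<le>n. \<Sum>l\<le>n. (if j = l then pi else 0))) {0..pi}"
    by (intro has_integral_sum) auto
  moreover have "fejer_kernel n = (\<lambda>t. \<Sum>j\<le>n. \<Sum>l\<le>n. cos (real_of_int (2 * int j - 2 * int l) * t))"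
    unfolding fejer_kernel_double_sum by (rule ext) (simp add: algebra_simps)
  ultimately show ?thesis by (simp add: algebra_simps)
qed

definition annihilating_kernel :: "nat \<Rightarrow> real \<Rightarrow> real" where
  "annihilating_kernel n t = cos (real (4*n+2) * t) * fejer_kernel n t"

lemma continuous_on_annihilating_kernel: "continuous_on S (annihilating_kernel n)"
  unfolding annihilating_kernel_def by (intro continuous_intros continuous_on_fejer_kernel)

lemma annihilating_kernel_expansion:
  "annihilating_kernel n t = (\<Sum>j\<le>n. \<Sum>l\<le>n.
     (cos (real (4*n+2+2*j-2*l) * t) + cos (real (4*n+2+2*l-2*j) * t)) / 2)"
proof -
  have "cos (real (4*n+2) * t) * cos (real (2*j) * t - real (2*l) * t)
      = (cos (real (4*n+2+2*j-2*l) * t) + cos (real (4*n+2+2*l-2*j) * t)) / 2"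
    if "j \<le> n" "l \<le> n" for j l
  proof -
    have "real (4*n+2+2*j-2*l) * t = real (4*n+2) * t + (real (2*j) * t - real (2*l) * t)"
      and "real (4*n+2+2*l-2*j) * t = real (4*n+2) * t - (real (2*j) * t - real (2*l) * t)"
      using that by (simp_all add: of_nat_diff algebra_simps)
    then show ?thesis by (simp only: cos_add cos_diff) simp
  qed
  then show ?thesis
    unfolding annihilating_kernel_def fejer_kernel_double_sum sum_distrib_left
    by (intro sum.cong refl) auto
qed

lemma has_integral_poly_cos_annihilating_kernel:
  fixes p :: "real poly"
  assumes "degree p \<le> n"
  shows "((\<lambda>t. poly p (cos t) * annihilating_kernel n t) has_integral 0) {0..pi}"
proof -
  have "((\<lambda>t. \<Sum>j\<le>n. \<Sum>l\<le>n. (poly p (cos t) * cos (real (4*n+2+2*j-2*l) * t)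
      + poly p (cos t) * cos (real (4*n+2+2*l-2*j) * t)) / 2)
      has_integral (\<Sum>j\<le>n. \<Sum>l\<le>n. (0 + 0) / 2)) {0..pi}"
    using assms
    by (intro has_integral_sum has_integral_divide has_integral_add
        has_integral_poly_cos_cos_multiple) auto
  then show ?thesis
    unfolding annihilating_kernel_expansion sum_distrib_left by (simp add: distrib_left)
qed

lemma integral_sin_annihilating_kernel_le:
  "integral {0..pi} (\<lambda>t. sin t * annihilating_kernel n t)
     \<le> - (2 * (real n + 1)\<^sup>2 / (real (6*n+2))\<^sup>2)"
proof -
  define sin_cos_int where "sin_cos_int k = -2 / ((real k)\<^sup>2 - 1)" for k :: nat
  have sin_cos_int_le: "sin_cos_int k \<le> -2 / (real (6*n+2))\<^sup>2" if "2 \<le> k" "k \<le> 6*n+2" for k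
  proof -
    have "(real k)\<^sup>2 \<le> (real (6*n+2))\<^sup>2"
      using that by (intro power_mono) auto
    then have "(real k)\<^sup>2 - 1 \<le> (real (6*n+2))\<^sup>2" by linarith
    moreover have "(real k)\<^sup>2 \<ge> 2\<^sup>2" using that by (intro power_mono) auto
    ultimately show ?thesis unfolding sin_cos_int_def by (simp add: frac_le divide_le_cancel)
  qed
  have "((\<lambda>t. \<Sum>j\<le>n. \<Sum>l\<le>n. (sin t * cos (real (4*n+2+2*j-2*l) * t)
      + sin t * cos (real (4*n+2+2*l-2*j) * t)) / 2)
      has_integral (\<Sum>j\<le>n. \<Sum>l\<le>n. (sin_cos_int (4*n+2+2*j-2*l) + sin_cos_int (4*n+2+2*l-2*j)) / 2)) {0..pi}"
    unfolding sin_cos_int_def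
    by (intro has_integral_sum has_integral_divide has_integral_add
        has_integral_sin_cos_even_multiple) auto
  then have "integral {0..pi} (\<lambda>t. sin t * annihilating_kernel n t)
      = (\<Sum>j\<le>n. \<Sum>l\<le>n. (sin_cos_int (4*n+2+2*j-2*l) + sin_cos_int (4*n+2+2*l-2*j)) / 2)"
    unfolding annihilating_kernel_expansion sum_distrib_left
    by (intro integral_unique) (simp add: distrib_left)
  also have "\<dots> \<le> (\<Sum>j\<le>n. \<Sum>l\<le>n. (-2 / (real (6*n+2))\<^sup>2 + -2 / (real (6*n+2))\<^sup>2) / 2)"
    by (intro sum_mono divide_right_mono add_mono sin_cos_int_le) auto
  also have "\<dots> = (real n + 1) * ((real n + 1) * (-2 / (real (6*n+2))\<^sup>2))"
    by (simp add: algebra_simps)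
  also have "\<dots> = - (2 * (real n + 1)\<^sup>2 / (real (6*n+2))\<^sup>2)"
    by (simp add: power2_eq_square algebra_simps)
  finally show ?thesis .
qed

lemma abs_integral_sin_annihilating_kernel_le:
  fixes p :: "real poly"
  assumes "degree p \<le> n"
  shows "\<bar>integral {0..pi} (\<lambda>t. sin t * annihilating_kernel n t)\<bar>
           \<le> sup_dist f_circ p * (pi * (real n + 1))"
proof -
  define \<epsilon> where "\<epsilon> = sup_dist f_circ p"
  define I where "I = integral {0..pi} (\<lambda>t. sin t * annihilating_kernel n t)"
  have err: "\<bar>sin t - poly p (cos t)\<bar> \<le> \<epsilon>" if "t \<in> {0..pi}" for t
    using abs_diff_le_sup_dist_f_circ[of "cos t" p] f_circ_cos[OF that] unfolding \<epsilon>_def by auto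
  have "\<bar>sin 0 - poly p (cos 0)\<bar> \<le> \<epsilon>" by (rule err) (use pi_ge_zero in simp)
  then have "0 \<le> \<epsilon>" using abs_ge_zero[of "sin 0 - poly p (cos 0)"] by linarith
  have int_err: "((\<lambda>t. (sin t - poly p (cos t)) * annihilating_kernel n t) has_integral (I - 0)) {0..pi}"
    unfolding left_diff_distrib I_def
    by (intro has_integral_diff integrable_integral integrable_continuous_interval
        has_integral_poly_cos_annihilating_kernel assms continuous_intros
        continuous_on_annihilating_kernel)
  have int_bound: "((\<lambda>t. \<epsilon> * fejer_kernel n t) has_integral (\<epsilon> * (pi * (real n + 1)))) {0..pi}"
    by (rule has_integral_mult_right[OF has_integral_fejer_kernel])
  have "norm ((sin t - poly p (cos t)) * annihilating_kernel n t) \<le> \<epsilon> * fejer_kernel n t"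
    if "t \<in> {0..pi}" for t
  proof -
    have "norm ((sin t - poly p (cos t)) * annihilating_kernel n t)
        = \<bar>sin t - poly p (cos t)\<bar> * \<bar>cos (real (4*n+2) * t)\<bar> * fejer_kernel n t"
      by (simp add: annihilating_kernel_def abs_mult fejer_kernel_nonneg)
    also have "\<dots> \<le> \<epsilon> * 1 * fejer_kernel n t"
      by (intro mult_mono err that fejer_kernel_nonneg) (auto simp: \<open>0 \<le> \<epsilon>\<close>)
    finally show ?thesis by simp
  qed
  then have "norm (integral {0..pi} (\<lambda>t. (sin t - poly p (cos t)) * annihilating_kernel n t))
      \<le> integral {0..pi} (\<lambda>t. \<epsilon> * fejer_kernel n t)"
    using int_err int_bound by (intro integral_norm_bound_integral) auto
  then show ?thesis
    using integral_unique[OF int_err] integral_unique[OF has_integral_fejer_kernel]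
    unfolding I_def \<epsilon>_def by simp
qed

lemma sup_dist_f_circ_ge:
  fixes p :: "real poly"
  assumes "degree p \<le> n"
  shows "2 * (real n + 1) / (pi * (real (6*n+2))\<^sup>2) \<le> sup_dist f_circ p"
proof -
  have cancel: "c * a * (2 * a / (c * K)) = 2 * a\<^sup>2 / K" if "c \<noteq> 0" for a c K :: real
    using that by (cases "K = 0") (simp_all add: field_simps power2_eq_square)
  have "pi * (real n + 1) * (2 * (real n + 1) / (pi * (real (6*n+2))\<^sup>2))
      = 2 * (real n + 1)\<^sup>2 / (real (6*n+2))\<^sup>2"
    by (rule cancel) simp
  also have "\<dots> \<le> sup_dist f_circ p * (pi * (real n + 1))"
    using integral_sin_annihilating_kernel_le[of n] abs_integral_sin_annihilating_kernel_le[OF assms]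
    by linarith
  also have "\<dots> = pi * (real n + 1) * sup_dist f_circ p" by (rule mult.commute)
  finally show ?thesis by (rule mult_left_le_imp_le) (simp add: add_pos_nonneg)
qed

lemma best_Linf_dist_f_circ_ge:
  assumes "is_best_Linf f_circ n p" and "1 \<le> n"
  shows "1 / (32 * pi * real n) \<le> sup_dist f_circ p"
proof -
  have "1 / (32 * pi * real n) = 2 * real n / (pi * (8 * real n)\<^sup>2)"
    using assms(2) by (simp add: field_simps power2_eq_square)
  also have "\<dots> \<le> 2 * (real n + 1) / (pi * (real (6*n+2))\<^sup>2)"
  proof (rule frac_le)
    have "real (6*n+2) \<le> 8 * real n" using assms(2) by simp
    then show "pi * (real (6*n+2))\<^sup>2 \<le> pi * (8 * real n)\<^sup>2"
      using pi_gt_zero by (intro mult_left_mono power_mono) auto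
  qed (use pi_gt_zero in auto)
  also have "\<dots> \<le> sup_dist f_circ p"
    using assms(1) unfolding is_best_Linf_def by (intro sup_dist_f_circ_ge) auto
  finally show ?thesis .
qed

section \<open>A polynomial with L1 error of order log n / n^3\<close>

fun cheb_poly :: "nat \<Rightarrow> real poly" where
  "cheb_poly 0 = 1"
| "cheb_poly (Suc 0) = [:0, 1:]"
| "cheb_poly (Suc (Suc n)) = [:0, 2:] * cheb_poly (Suc n) - cheb_poly n"

lemma poly_cheb_poly_cos: "poly (cheb_poly n) (cos t) = cos (real n * t)"
proof (induction n rule: cheb_poly.induct)
  case (3 n)
  have "real (Suc (Suc n)) * t = real (Suc n) * t + t" "real n * t = real (Suc n) * t - t"
    by (simp_all add: algebra_simps)
  then have "cos (real (Suc (Suc n)) * t) + cos (real n * t) = 2 * cos t * cos (real (Suc n) * t)"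
    by (simp only: cos_add cos_diff) simp
  then show ?case using 3 by simp
qed auto

lemma degree_cheb_poly_le: "degree (cheb_poly n) \<le> n"
proof (induction n rule: cheb_poly.induct)
  case (3 n)
  have "degree ([:0, 2:] * cheb_poly (Suc n)) \<le> Suc (Suc n)"
    using degree_mult_le[of "[:0, 2:]" "cheb_poly (Suc n)"] 3 by simp
  moreover have "degree (cheb_poly n) \<le> Suc (Suc n)" using 3 by simp
  ultimately show ?case by (simp add: degree_diff_le)
qed auto

definition sin_sq_poly :: "nat \<Rightarrow> real poly" where
  "sin_sq_poly M = smult (1/2) (1 - pcompose (cheb_poly M) [:1, -2:])"

lemma poly_sin_sq_poly_sin: "poly (sin_sq_poly M) ((sin \<phi>)\<^sup>2) = (sin (real M * \<phi>))\<^sup>2"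
proof -
  have poly_eq: "poly (sin_sq_poly M) z = (1 - poly (cheb_poly M) (1 - 2 * z)) / 2" for z
  proof -
    have "poly [:1, -2:] z = 1 - 2 * z" by simp
    then show ?thesis unfolding sin_sq_poly_def by (simp add: poly_pcompose mult.commute)
  qed
  have "poly (cheb_poly M) (1 - 2 * (sin \<phi>)\<^sup>2) = cos (real M * (2 * \<phi>))"
    using poly_cheb_poly_cos[of M "2 * \<phi>"] by (simp only: cos_double_sin)
  also have "\<dots> = 1 - 2 * (sin (real M * \<phi>))\<^sup>2"
    by (simp add: cos_double_sin[symmetric] algebra_simps)
  finally show ?thesis by (simp add: poly_eq)
qed

lemma degree_sin_sq_poly_le: "degree (sin_sq_poly M) \<le> M"
proof -
  have "degree (pcompose (cheb_poly M) [:1, -2:]) \<le> M"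
    using degree_cheb_poly_le[of M] by (simp add: degree_pcompose)
  then have "degree (1 - pcompose (cheb_poly M) [:1, -2:]) \<le> M"
    by (intro degree_diff_le) auto
  then show ?thesis unfolding sin_sq_poly_def by (meson degree_smult_le le_trans)
qed

text \<open>In the variable z = sin(phi)^2 this is the Fejer kernel sin(M phi)^2 / sin(phi)^2.\<close>

definition fejer_poly :: "nat \<Rightarrow> real poly" where
  "fejer_poly M = sin_sq_poly M div [:0, 1:]"

lemma sin_sq_poly_eq: "sin_sq_poly M = [:0, 1:] * fejer_poly M"
proof -
  have "poly (sin_sq_poly M) 0 = 0"
    using poly_sin_sq_poly_sin[of M 0] by simp
  then have "[:0, 1:] dvd sin_sq_poly M"
    using poly_eq_0_iff_dvd[of "sin_sq_poly M" 0] by simp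
  then show ?thesis unfolding fejer_poly_def by (rule dvd_mult_div_cancel[symmetric])
qed

lemma degree_fejer_poly_le: "degree (fejer_poly M) \<le> M"
proof (cases "fejer_poly M = 0")
  case False
  then have "degree (sin_sq_poly M) = 1 + degree (fejer_poly M)"
    by (subst sin_sq_poly_eq) (simp add: degree_mult_eq)
  then show ?thesis using degree_sin_sq_poly_le[of M] by simp
qed simp

lemma poly_fejer_poly_arcsin:
  assumes "0 < u" "u \<le> 1"
  shows "u\<^sup>2 * poly (fejer_poly M) (u\<^sup>2) = (sin (real M * arcsin u))\<^sup>2"
  using poly_sin_sq_poly_sin[of M "arcsin u"] assms by (simp add: sin_sq_poly_eq)

lemma fejer_poly_sq_le:
  assumes "0 < u" "u \<le> 1"
  shows "(poly (fejer_poly M) (u\<^sup>2))\<^sup>2 \<le> 1 / u ^ 4"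
proof -
  define P where "P = poly (fejer_poly M) (u\<^sup>2)"
  have eq: "u\<^sup>2 * P = (sin (real M * arcsin u))\<^sup>2"
    unfolding P_def using poly_fejer_poly_arcsin[OF assms] .
  moreover have "(sin (real M * arcsin u))\<^sup>2 \<le> 1"
    by (simp add: abs_square_le_1)
  ultimately have "P \<le> 1 / u\<^sup>2"
    using assms by (simp add: field_simps)
  moreover have "0 \<le> P"
    using eq assms by (metis zero_le_power2 zero_le_mult_iff zero_less_power2 not_le less_irrefl)
  ultimately have "P\<^sup>2 \<le> (1 / u\<^sup>2)\<^sup>2" by (intro power_mono)
  then show ?thesis unfolding P_def by (simp add: power_divide power_mult[symmetric])
qed

lemma half_le_sin:
  fixes x :: real
  assumes "0 \<le> x" "x \<le> 1"
  shows "x / 2 \<le> sin x"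
proof -
  have "cos z - 1/2 \<ge> 0" if "0 < z" "z < x" for z
  proof -
    have "cos (pi / 3) \<le> cos z"
      using that assms pi_gt3 by (intro cos_monotone_0_pi_le) auto
    then show ?thesis using cos_60 by simp
  qed
  then have "(\<lambda>x. sin x - x / 2) 0 \<le> (\<lambda>x. sin x - x / 2) x"
    using assms(1)
    by (intro DERIV_nonneg_imp_increasing_open[where f = "\<lambda>x. sin x - x / 2"])
       (auto intro!: derivative_eq_intros continuous_intros)
  then show ?thesis by simp
qed

lemma fejer_poly_sq_ge:
  assumes M: "1 \<le> M" and u: "0 < u" "u \<le> 1 / (2 * real M)"
  shows "(real M)^4 / 16 \<le> (poly (fejer_poly M) (u\<^sup>2))\<^sup>2"
proof -
  define \<phi> where "\<phi> = arcsin u"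
  have "1 / (2 * real M) \<le> 1 / 2" using M by (intro divide_left_mono) auto
  then have u1: "u \<le> 1/2" using u by linarith
  have "u \<le> sin (2 * u)" using half_le_sin[of "2 * u"] u u1 by simp
  then have "\<phi> \<le> 2 * u" unfolding \<phi>_def using u u1 pi_gt3 by (subst arcsin_le_iff) auto
  have "0 \<le> \<phi>" unfolding \<phi>_def using u u1 by (intro arcsin_nonneg) auto
  have "u \<le> \<phi>" using sin_x_le_x[OF \<open>0 \<le> \<phi>\<close>] u u1 unfolding \<phi>_def by simp
  have "real M * \<phi> \<le> real M * (2 * u)" using \<open>\<phi> \<le> 2 * u\<close> by (simp add: mult_left_mono)
  also have "\<dots> \<le> 1" using u M by (simp add: field_simps)
  finally have "real M * \<phi> / 2 \<le> sin (real M * \<phi>)"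
    using half_le_sin \<open>0 \<le> \<phi>\<close> by simp
  moreover have "real M * u / 2 \<le> real M * \<phi> / 2" using \<open>u \<le> \<phi>\<close> by (simp add: mult_left_mono)
  ultimately have "(real M * u / 2)\<^sup>2 \<le> (sin (real M * \<phi>))\<^sup>2"
    using u by (intro power_mono) auto
  then have "u\<^sup>2 * ((real M)\<^sup>2 / 4) \<le> u\<^sup>2 * poly (fejer_poly M) (u\<^sup>2)"
    using poly_fejer_poly_arcsin[of u M] u u1 unfolding \<phi>_def
    by (simp add: power_mult_distrib field_simps)
  then have "(real M)\<^sup>2 / 4 \<le> poly (fejer_poly M) (u\<^sup>2)"
    using u by (simp add: mult_le_cancel_left_pos)
  then have "((real M)\<^sup>2 / 4)\<^sup>2 \<le> (poly (fejer_poly M) (u\<^sup>2))\<^sup>2"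
    by (intro power_mono) auto
  then show ?thesis by (simp add: power_divide power_mult[symmetric])
qed

definition odd_primitive :: "real poly \<Rightarrow> real \<Rightarrow> real" where
  "odd_primitive p y = (\<Sum>j\<le>degree p. coeff p j / (2 * real j + 1) * y ^ (2 * j + 1))"

definition odd_primitive_poly :: "real poly \<Rightarrow> real poly" where
  "odd_primitive_poly p = (\<Sum>j\<le>degree p. monom (coeff p j / (2 * real j + 1)) (j + 1))"

lemma odd_primitive_0 [simp]: "odd_primitive p 0 = 0"
  unfolding odd_primitive_def by simp

lemma continuous_on_odd_primitive: "continuous_on S (odd_primitive p)"
  unfolding odd_primitive_def by (intro continuous_intros)

lemma has_real_derivative_odd_primitive:
  "(odd_primitive p has_real_derivative poly p (y\<^sup>2)) (at y)"
proof -
  have "((\<lambda>y. coeff p j / (2 * real j + 1) * y ^ (2 * j + 1)) has_real_derivative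
      coeff p j * (y\<^sup>2) ^ j) (at y)" for j
  proof -
    have "((\<lambda>y. coeff p j / (2 * real j + 1) * y ^ (2 * j + 1)) has_real_derivative
        coeff p j / (2 * real j + 1) * (real (2 * j + 1) * y ^ (2 * j + 1 - Suc 0))) (at y)"
      by (intro DERIV_cmult DERIV_pow)
    moreover have "coeff p j / (2 * real j + 1) * (real (2 * j + 1) * y ^ (2 * j + 1 - Suc 0))
        = coeff p j * y ^ (2 * j)"
      by (simp add: field_simps add_pos_nonneg)
    moreover have "(y\<^sup>2) ^ j = y ^ (2 * j)" by (simp add: power_mult)
    ultimately show ?thesis by simp
  qed
  then have "(odd_primitive p has_real_derivative (\<Sum>j\<le>degree p. coeff p j * (y\<^sup>2) ^ j)) (at y)"
    unfolding odd_primitive_def by (rule DERIV_sum)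
  then show ?thesis by (simp add: poly_altdef)
qed

lemma odd_primitive_mono:
  assumes "\<And>z. 0 \<le> poly p z" and "a \<le> b"
  shows "odd_primitive p a \<le> odd_primitive p b"
  using assms has_real_derivative_odd_primitive continuous_on_odd_primitive
  by (intro DERIV_nonneg_imp_increasing_open[OF \<open>a \<le> b\<close>]) blast+

lemma poly_odd_primitive_poly: "poly (odd_primitive_poly p) (y\<^sup>2) = y * odd_primitive p y"
proof -
  have "(y\<^sup>2) ^ (j + 1) = y * y ^ (2 * j + 1)" for j
  proof -
    have "(y\<^sup>2) ^ (j + 1) = y ^ (2 * (j + 1))" by (rule power_mult[symmetric])
    also have "2 * (j + 1) = Suc (2 * j + 1)" by simp
    finally show ?thesis by (simp only: power_Suc)
  qed
  then show ?thesis
    unfolding odd_primitive_poly_def odd_primitive_def poly_sum poly_monom sum_distrib_left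
    by (intro sum.cong refl) (simp only: mult.assoc mult.left_commute)
qed

lemma degree_odd_primitive_poly_le: "degree (odd_primitive_poly p) \<le> degree p + 1"
  unfolding odd_primitive_poly_def
  by (intro degree_sum_le) (auto intro: order.trans[OF degree_monom_le])

definition fejer_primitive :: "nat \<Rightarrow> real \<Rightarrow> real" where
  "fejer_primitive M = odd_primitive (fejer_poly M ^ 2)"

lemma has_real_derivative_fejer_primitive:
  "(fejer_primitive M has_real_derivative (poly (fejer_poly M) (y\<^sup>2))\<^sup>2) (at y)"
  using has_real_derivative_odd_primitive[of "fejer_poly M ^ 2" y]
  unfolding fejer_primitive_def by simp

lemma fejer_primitive_mono: "a \<le> b \<Longrightarrow> fejer_primitive M a \<le> fejer_primitive M b"
  unfolding fejer_primitive_def by (rule odd_primitive_mono) simp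

lemma continuous_on_fejer_primitive: "continuous_on S (fejer_primitive M)"
  unfolding fejer_primitive_def by (rule continuous_on_odd_primitive)

lemma fejer_primitive_1_ge:
  assumes M: "1 \<le> M"
  shows "(real M)^3 / 32 \<le> fejer_primitive M 1"
proof -
  define c where "c = (real M)^4 / 16"
  define h where "h = 1 / (2 * real M)"
  have h: "0 \<le> h" "h \<le> 1" unfolding h_def using M by (auto simp: field_simps)
  have "c \<le> (poly (fejer_poly M) (u\<^sup>2))\<^sup>2" if "0 < u" "u < h" for u
    using fejer_poly_sq_ge[OF M, of u] that unfolding c_def h_def by simp
  then have "(\<lambda>u. fejer_primitive M u - c * u) 0 \<le> (\<lambda>u. fejer_primitive M u - c * u) h"
    using h(1)
    by (intro DERIV_nonneg_imp_increasing_open[where f = "\<lambda>u. fejer_primitive M u - c * u"])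
       (auto intro!: derivative_eq_intros has_real_derivative_fejer_primitive
             continuous_intros continuous_on_fejer_primitive)
  moreover have "fejer_primitive M 0 = 0" unfolding fejer_primitive_def by simp
  moreover have "c * h = (real M)^3 / 32" unfolding c_def h_def using M
    by (simp add: field_simps power_def)
  moreover have "fejer_primitive M h \<le> fejer_primitive M 1" using fejer_primitive_mono h by simp
  ultimately show ?thesis by simp
qed

lemma fejer_primitive_1_pos:
  assumes "1 \<le> M"
  shows "0 < fejer_primitive M 1"
proof -
  have "0 < (real M)^3 / 32" using assms by simp
  then show ?thesis using fejer_primitive_1_ge[OF assms] by linarith
qed

lemma fejer_primitive_tail_le:
  assumes "0 < y" "y \<le> 1"
  shows "fejer_primitive M 1 - fejer_primitive M y \<le> 1 / (3 * y^3)"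
proof -
  \<comment> \<open>the derivative of H is at most 1/u^4, whose primitive is -1/(3u^3)\<close>
  have "(\<lambda>u. fejer_primitive M u + 1 / (3 * u^3)) 1 \<le> (\<lambda>u. fejer_primitive M u + 1 / (3 * u^3)) y"
  proof (rule DERIV_nonpos_imp_decreasing_open[OF assms(2)])
    fix u assume u: "y < u" "u < 1"
    then have "0 < u" using assms by simp
    have "((\<lambda>u. fejer_primitive M u + 1 / (3 * u^3)) has_real_derivative
        (poly (fejer_poly M) (u\<^sup>2))\<^sup>2 - 1 / u ^ 4) (at u)"
    proof -
      have "((\<lambda>u. fejer_primitive M u + 1 / (3 * u^3)) has_real_derivative
          (poly (fejer_poly M) (u\<^sup>2))\<^sup>2 + (- (3 * (real 3 * u\<^sup>2)) / (3 * u^3)\<^sup>2)) (at u)"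
        using \<open>0 < u\<close>
        by (auto intro!: derivative_eq_intros has_real_derivative_fejer_primitive
                 simp: power2_eq_square)
      moreover have "- (3 * (real 3 * u\<^sup>2)) / (3 * u^3)\<^sup>2 = - 1 / u ^ 4"
        using \<open>0 < u\<close> by (simp add: field_simps power2_eq_square power_def)
      ultimately show ?thesis by simp
    qed
    moreover have "(poly (fejer_poly M) (u\<^sup>2))\<^sup>2 - 1 / u ^ 4 \<le> 0"
      using fejer_poly_sq_le[of u M] u \<open>0 < u\<close> by simp
    ultimately show "\<exists>d. ((\<lambda>u. fejer_primitive M u + 1 / (3 * u^3)) has_real_derivative d) (at u)
        \<and> d \<le> 0" by blast
  next
    show "continuous_on {y..1} (\<lambda>u. fejer_primitive M u + 1 / (3 * u^3))"
      using assms by (intro continuous_intros continuous_on_fejer_primitive) auto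
  qed
  then show ?thesis by simp
qed

lemma fejer_primitive_rel_error_le:
  assumes M: "1 \<le> M" and y: "0 < y" "y \<le> 1"
  shows "y * (fejer_primitive M 1 - fejer_primitive M y) / fejer_primitive M 1
           \<le> 32 / (3 * (real M)^3 * y\<^sup>2)"
proof -
  define D where "D = fejer_primitive M 1"
  have "0 < D" unfolding D_def by (rule fejer_primitive_1_pos[OF M])
  have "y * (D - fejer_primitive M y) \<le> y * (1 / (3 * y^3))"
    unfolding D_def using y by (intro mult_left_mono fejer_primitive_tail_le) auto
  also have "\<dots> = 1 / (3 * y\<^sup>2)" using y by (simp add: field_simps power_def)
  finally have "y * (D - fejer_primitive M y) / D \<le> 1 / (3 * y\<^sup>2) / D"
    by (rule divide_right_mono) (use \<open>0 < D\<close> in simp)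
  also have "\<dots> \<le> 1 / (3 * y\<^sup>2) / ((real M)^3 / 32)"
    using fejer_primitive_1_ge[OF M] \<open>0 < D\<close> M unfolding D_def
    by (intro divide_left_mono) auto
  also have "\<dots> = 32 / (3 * (real M)^3 * y\<^sup>2)" by (simp add: field_simps)
  finally show ?thesis unfolding D_def .
qed

lemma fejer_primitive_error_le:
  assumes M: "1 \<le> M" and y: "0 \<le> y" "y \<le> 1"
  shows "y * (fejer_primitive M 1 - fejer_primitive M y) / fejer_primitive M 1
           \<le> 22 / ((real M)^3 * y\<^sup>2 + real M)"
proof -
  define D where "D = fejer_primitive M 1"
  define e where "e = y * (D - fejer_primitive M y) / D"
  define K where "K = (real M)^3 * y\<^sup>2 + real M"
  have "1 \<le> real M" using M by simp
  have "0 < D" unfolding D_def by (rule fejer_primitive_1_pos[OF M])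
  have "0 \<le> fejer_primitive M y" "fejer_primitive M y \<le> D"
    using fejer_primitive_mono[OF y(1), of M] fejer_primitive_mono[OF y(2), of M]
    unfolding D_def fejer_primitive_def by simp_all
  then have "0 \<le> e" "e \<le> y"
    unfolding e_def using y \<open>0 < D\<close> by (simp_all add: divide_le_eq mult_left_mono)
  have "0 < K" unfolding K_def using \<open>1 \<le> real M\<close> by (simp add: add_nonneg_pos)
  have "e * K \<le> 22"
  proof (cases "1 \<le> real M * y")
    case True
    then have "0 < y" using y by (metis mult_zero_right not_one_le_zero order_le_less)
    have "1 \<le> (real M * y)\<^sup>2" using True by (simp add: one_le_power)
    then have "K \<le> 2 * (real M)^3 * y\<^sup>2"
      unfolding K_def using \<open>1 \<le> real M\<close> by (simp add: power_def algebra_simps)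
    moreover have "e \<le> 32 / (3 * (real M)^3 * y\<^sup>2)"
      unfolding e_def D_def by (rule fejer_primitive_rel_error_le[OF M \<open>0 < y\<close> y(2)])
    ultimately have "e * K \<le> 32 / (3 * (real M)^3 * y\<^sup>2) * (2 * (real M)^3 * y\<^sup>2)"
      using \<open>0 \<le> e\<close> \<open>0 < K\<close> by (intro mult_mono) auto
    also have "\<dots> = 64 / 3" using \<open>0 < y\<close> M by (simp add: field_simps)
    finally show ?thesis by simp
  next
    case False
    then have "(real M * y)\<^sup>2 \<le> 1" using y \<open>1 \<le> real M\<close> by (simp add: power_le_one)
    then have "K \<le> 2 * real M"
      unfolding K_def using \<open>1 \<le> real M\<close> by (simp add: power_def algebra_simps)
    then have "e * K \<le> y * (2 * real M)"
      using \<open>0 \<le> e\<close> \<open>e \<le> y\<close> \<open>0 < K\<close> y by (meson mult_mono order.trans mult_left_mono less_imp_le)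
    also have "\<dots> = 2 * (real M * y)" by simp
    also have "\<dots> \<le> 2" using False by simp
    finally show ?thesis by simp
  qed
  then show ?thesis
    using \<open>0 < K\<close> unfolding e_def[symmetric] D_def[symmetric] K_def[symmetric]
    by (simp add: pos_le_divide_eq)
qed

text \<open>The approximant y H(y)/H(1) with y = sqrt(1 - x^2); it is a polynomial in x because
  y H(y) is even in y.\<close>

definition circ_approx :: "nat \<Rightarrow> real poly" where
  "circ_approx M = smult (1 / fejer_primitive M 1)
     (pcompose (odd_primitive_poly (fejer_poly M ^ 2)) [:1, 0, -1:])"

lemma degree_circ_approx_le: "degree (circ_approx M) \<le> 4 * M + 2"
proof -
  have "degree (fejer_poly M ^ 2) \<le> 2 * M"
    using degree_power_le[of "fejer_poly M" 2] degree_fejer_poly_le[of M] by simp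
  then have "degree (pcompose (odd_primitive_poly (fejer_poly M ^ 2)) [:1, 0, -1:]) \<le> 4 * M + 2"
    using degree_odd_primitive_poly_le[of "fejer_poly M ^ 2"] by (simp add: degree_pcompose)
  then show ?thesis unfolding circ_approx_def by (meson degree_smult_le le_trans)
qed

lemma poly_circ_approx:
  assumes "x \<in> {-1..1}"
  shows "poly (circ_approx M) x
           = f_circ x * fejer_primitive M (f_circ x) / fejer_primitive M 1"
proof -
  have "x\<^sup>2 \<le> 1" using assms by (auto simp: abs_square_le_1)
  then have "poly [:1, 0, -1:] x = (f_circ x)\<^sup>2"
    unfolding f_circ_def by (simp add: power2_eq_square)
  then show ?thesis
    unfolding circ_approx_def
    by (simp add: poly_pcompose poly_odd_primitive_poly fejer_primitive_def)
qed

lemma f_circ_minus_circ_approx_bounds: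
  assumes M: "1 \<le> M" and x: "x \<in> {-1..1}"
  shows "0 \<le> f_circ x - poly (circ_approx M) x"
    and "f_circ x - poly (circ_approx M) x \<le> 22 / ((real M)^3 * (1 - x\<^sup>2) + real M)"
proof -
  define y where "y = f_circ x"
  have "x\<^sup>2 \<le> 1" using x by (auto simp: abs_square_le_1)
  then have y: "0 \<le> y" "y \<le> 1" "y\<^sup>2 = 1 - x\<^sup>2" unfolding y_def f_circ_def by auto
  have "0 < fejer_primitive M 1" by (rule fejer_primitive_1_pos[OF M])
  then have eq: "f_circ x - poly (circ_approx M) x
      = y * (fejer_primitive M 1 - fejer_primitive M y) / fejer_primitive M 1"
    unfolding poly_circ_approx[OF x] y_def[symmetric] by (simp add: field_simps)
  show "0 \<le> f_circ x - poly (circ_approx M) x"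
    unfolding eq using y \<open>0 < fejer_primitive M 1\<close> fejer_primitive_mono[OF y(2)] by simp
  show "f_circ x - poly (circ_approx M) x \<le> 22 / ((real M)^3 * (1 - x\<^sup>2) + real M)"
    unfolding eq y(3)[symmetric] by (rule fejer_primitive_error_le[OF M y(1,2)])
qed

lemma has_integral_recip_linear_pair:
  fixes a b :: real
  assumes "0 < a" "0 < b"
  shows "((\<lambda>x. 1 / (a * (1 - x) + b) + 1 / (a * (1 + x) + b)) has_integral
           (2 / a * ln (2 * a / b + 1))) {-1..1}"
proof -
  define G where "G x = (ln (a * (1 + x) + b) - ln (a * (1 - x) + b)) / a" for x
  have "((\<lambda>x. 1 / (a * (1 - x) + b) + 1 / (a * (1 + x) + b)) has_integral (G 1 - G (-1))) {-1..1}"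
  proof (rule fundamental_theorem_of_calculus_real)
    fix x :: real assume "x \<in> {-1..1}"
    then have pos: "0 < a * (1 + x) + b" "0 < a * (1 - x) + b"
      using assms by (auto intro!: add_nonneg_pos)
    have "(G has_real_derivative (a / (a * (1 + x) + b) - (- a) / (a * (1 - x) + b)) / a) (at x)"
      unfolding G_def using pos assms by (auto intro!: derivative_eq_intros)
    moreover have "(a / A - (- a) / B) / a = 1 / B + 1 / A" if "A \<noteq> 0" "B \<noteq> 0" for A B
      using that assms by (simp add: field_simps)
    then have "(a / (a * (1 + x) + b) - (- a) / (a * (1 - x) + b)) / a
        = 1 / (a * (1 - x) + b) + 1 / (a * (1 + x) + b)"
      using pos by simp
    ultimately show "(G has_real_derivative 1 / (a * (1 - x) + b) + 1 / (a * (1 + x) + b)) (at x)"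
      by simp
  qed simp
  moreover have "G 1 - G (-1) = 2 / a * ln (2 * a / b + 1)"
  proof -
    have frac: "2 * a / b + 1 = (2 * a + b) / b" using assms by (simp add: field_simps)
    have "G 1 - G (-1) = 2 / a * (ln (2 * a + b) - ln b)"
      unfolding G_def using assms by (simp add: field_simps)
    also have "ln (2 * a + b) - ln b = ln (2 * a / b + 1)"
      unfolding frac using assms by (simp add: ln_div)
    finally show ?thesis .
  qed
  ultimately show ?thesis by simp
qed

lemma recip_one_minus_sq_le_recip_pair:
  fixes a b x :: real
  assumes "0 < a" "0 < b" and x: "x \<in> {-1..1}"
  shows "1 / (a * (1 - x\<^sup>2) + b) \<le> 1 / (a * (1 - x) + b) + 1 / (a * (1 + x) + b)"
proof -
  have pos: "0 < a * (1 - x) + b" "0 < a * (1 + x) + b"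
    using x assms by (auto intro!: add_nonneg_pos)
  have "x\<^sup>2 \<le> 1" using x by (auto simp: abs_square_le_1)
  then have "0 < a * (1 - x\<^sup>2) + b" using assms by (intro add_nonneg_pos) auto
  then have mono: "1 / (a * (1 - x\<^sup>2) + b) \<le> 1 / (a * c + b)"
    if "c \<le> 1 - x\<^sup>2" "0 < a * c + b" for c
    using that \<open>0 < a\<close> by (intro divide_left_mono add_right_mono mult_left_mono) auto
  show ?thesis
  proof (cases "0 \<le> x")
    case True
    then have "x * x \<le> x * 1" using x by (intro mult_left_mono) auto
    then have "1 / (a * (1 - x\<^sup>2) + b) \<le> 1 / (a * (1 - x) + b)"
      using pos by (intro mono) (auto simp: power2_eq_square)
    moreover have "0 \<le> 1 / (a * (1 + x) + b)" using pos by simp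
    ultimately show ?thesis by linarith
  next
    case False
    then have "(- x) * (- x) \<le> (- x) * 1" using x by (intro mult_left_mono) auto
    then have "1 / (a * (1 - x\<^sup>2) + b) \<le> 1 / (a * (1 + x) + b)"
      using pos by (intro mono) (auto simp: power2_eq_square)
    moreover have "0 \<le> 1 / (a * (1 - x) + b)" using pos by simp
    ultimately show ?thesis by linarith
  qed
qed

lemma L1_dist_circ_approx_le:
  assumes M: "1 \<le> M"
  shows "L1_dist f_circ (circ_approx M) \<le> 44 / (real M)^3 * ln (2 * (real M)\<^sup>2 + 1)"
proof -
  define a where "a = (real M)^3"
  define b where "b = real M"
  have "0 < a" "0 < b" unfolding a_def b_def using M by auto
  let ?g = "\<lambda>x. 22 * (1 / (a * (1 - x) + b) + 1 / (a * (1 + x) + b))"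
  have int_g: "(?g has_integral (22 * (2 / a * ln (2 * a / b + 1)))) {-1..1}"
    by (intro has_integral_mult_right has_integral_recip_linear_pair \<open>0 < a\<close> \<open>0 < b\<close>)
  have "\<bar>f_circ x - poly (circ_approx M) x\<bar> \<le> 22 * (1 / (a * (1 - x\<^sup>2) + b))"
    if "x \<in> {-1..1}" for x
    using f_circ_minus_circ_approx_bounds[OF M that] unfolding a_def b_def by simp
  also have "22 * (1 / (a * (1 - x\<^sup>2) + b)) \<le> ?g x" if "x \<in> {-1..1}" for x
    using recip_one_minus_sq_le_recip_pair[OF \<open>0 < a\<close> \<open>0 < b\<close> that] by simp
  finally have "L1_dist f_circ (circ_approx M) \<le> integral {-1..1} ?g"
    unfolding L1_dist_def
    by (intro integral_le has_integral_integrable[OF int_g] integrable_continuous_interval)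
       (auto intro!: continuous_intros continuous_on_f_circ)
  also have "\<dots> = 44 / (real M)^3 * ln (2 * (real M)\<^sup>2 + 1)"
    using integral_unique[OF int_g] M unfolding a_def b_def by (simp add: power_def field_simps)
  finally show ?thesis .
qed

section \<open>The measure of the large-error set\<close>

lemma measure_superlevel_le_integral:
  fixes g :: "real \<Rightarrow> real"
  assumes c: "0 < c" and g: "continuous_on {a..b} g" "\<And>x. x \<in> {a..b} \<Longrightarrow> 0 \<le> g x"
  shows "measure lebesgue {x \<in> {a..b}. c \<le> g x} \<le> integral {a..b} g / c"
proof -
  define S where "S = {x \<in> {a..b}. c \<le> g x}"
  have "closed S" unfolding S_def
    by (rule continuous_on_closed_Collect_le) (auto intro!: continuous_intros g)
  moreover have "bounded S" unfolding S_def by (rule bounded_subset[of "{a..b}"]) auto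
  ultimately have "compact S" by (simp add: compact_eq_bounded_closed)
  then have S: "S \<in> lmeasurable" by (rule lmeasurable_compact)
  have "S \<inter> {a..b} = S" unfolding S_def by auto
  then have "(\<lambda>x. if x \<in> S then 1 else 0::real) integrable_on {a..b}"
    and "measure lebesgue S = integral {a..b} (\<lambda>x. if x \<in> S then 1 else 0)"
    using S lmeasure_integral[OF S] integral_restrict_Int[of "{a..b}" S "\<lambda>x. 1::real"]
    by (simp_all add: integrable_restrict_Int lmeasurable_iff_integrable_on)
  then have ind: "((\<lambda>x. if x \<in> S then 1 else 0) has_integral measure lebesgue S) {a..b}"
    by (simp add: integrable_integral)
  have "c * measure lebesgue S \<le> integral {a..b} g"
  proof (rule has_integral_le[OF has_integral_mult_right[OF ind] integrable_integral])
    show "g integrable_on {a..b}" using g(1) by (rule integrable_continuous_interval)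
    show "c * (if x \<in> S then 1 else 0) \<le> g x" if "x \<in> {a..b}" for x
      using g(2)[OF that] that unfolding S_def by auto
  qed
  then show ?thesis unfolding S_def[symmetric] using c by (simp add: field_simps)
qed

lemma best_L1_dist_f_circ_le:
  assumes "is_best_L1 f_circ n p" and n: "10 \<le> n"
  shows "L1_dist f_circ p \<le> 67584 * ln (real n) / (real n)^3"
proof -
  define M where "M = (n - 2) div 4"
  have "1 \<le> M" "4 * M + 2 \<le> n" "n \<le> 4 * M + 5" unfolding M_def using n by presburger+
  then have M: "real n / 8 \<le> real M" "4 * real M \<le> real n" "0 < real M"
    using n by linarith+
  have "L1_dist f_circ p \<le> L1_dist f_circ (circ_approx M)"
    using assms(1) degree_circ_approx_le[of M] \<open>4 * M + 2 \<le> n\<close> unfolding is_best_L1_def by auto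
  also have "\<dots> \<le> 44 / (real M)^3 * ln (2 * (real M)\<^sup>2 + 1)"
    by (rule L1_dist_circ_approx_le[OF \<open>1 \<le> M\<close>])
  also have "\<dots> \<le> 44 / (real n / 8)^3 * ln ((real n)^3)"
  proof (intro mult_mono divide_left_mono power_mono ln_mono)
    have "16 * (real M)\<^sup>2 \<le> (real n)\<^sup>2"
      using power_mono[OF \<open>4 * real M \<le> real n\<close>, of 2] M by (simp add: power_mult_distrib)
    moreover have "1 \<le> (real n)\<^sup>2" using n by (simp add: one_le_power)
    moreover have "2 * (real n)\<^sup>2 \<le> real n * (real n)\<^sup>2"
      using n by (intro mult_right_mono) auto
    moreover have "real n * (real n)\<^sup>2 = (real n)^3" by (simp add: power2_eq_square power3_eq_cube)
    ultimately show "2 * (real M)\<^sup>2 + 1 \<le> (real n)^3" by linarith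
  qed (use M n in \<open>auto intro!: add_nonneg_pos\<close>)
  also have "\<dots> = 67584 * ln (real n) / (real n)^3"
    using n by (simp add: ln_realpow field_simps)
  finally show ?thesis .
qed

lemma measure_large_error_le:
  fixes p :: "real poly"
  assumes "0 < E"
  shows "measure lebesgue {x \<in> {-1..1}. E / 2 \<le> \<bar>f_circ x - poly p x\<bar>}
           \<le> 2 * L1_dist f_circ p / E"
proof -
  have "measure lebesgue {x \<in> {-1..1}. E / 2 \<le> \<bar>f_circ x - poly p x\<bar>}
      \<le> integral {-1..1} (\<lambda>x. \<bar>f_circ x - poly p x\<bar>) / (E / 2)"
    using assms continuous_on_f_circ
    by (intro measure_superlevel_le_integral) (auto intro!: continuous_intros)
  then show ?thesis unfolding L1_dist_def by (simp add: mult.commute)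
qed

lemma measure_large_error_best_L1_le:
  assumes "is_best_L1 f_circ n p" and "is_best_Linf f_circ n q" and n: "10 \<le> n"
  shows "measure lebesgue {x \<in> {-1..1}. sup_dist f_circ q / 2 \<le> \<bar>f_circ x - poly p x\<bar>}
           \<le> 17301504 * (ln (real n) / (real n)\<^sup>2)"
proof -
  define E where "E = sup_dist f_circ q"
  have E: "1 / (32 * pi * real n) \<le> E"
    unfolding E_def using best_Linf_dist_f_circ_ge[OF assms(2)] n by simp
  moreover have pos: "0 < 1 / (32 * pi * real n)" using n pi_gt_zero by simp
  ultimately have "0 < E" by linarith
  have inv_E: "1 / E \<le> 32 * pi * real n"
    using le_imp_inverse_le[OF E pos] by (simp add: inverse_eq_divide)
  have "0 \<le> ln (real n)" using n by simp
  have "measure lebesgue {x \<in> {-1..1}. E / 2 \<le> \<bar>f_circ x - poly p x\<bar>}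
      \<le> 2 * L1_dist f_circ p * (1 / E)"
    using measure_large_error_le[OF \<open>0 < E\<close>] by simp
  also have "\<dots> \<le> 2 * (67584 * ln (real n) / (real n)^3) * (32 * pi * real n)"
  proof (rule mult_mono)
    show "2 * L1_dist f_circ p \<le> 2 * (67584 * ln (real n) / (real n)^3)"
      using best_L1_dist_f_circ_le[OF assms(1) n] by simp
  qed (use inv_E \<open>0 < E\<close> \<open>0 \<le> ln (real n)\<close> in auto)
  also have "\<dots> = 4325376 * pi * (ln (real n) / (real n)\<^sup>2)"
    using n by (simp add: power2_eq_square power3_eq_cube)
  also have "\<dots> \<le> 17301504 * (ln (real n) / (real n)\<^sup>2)"
    using pi_less_4 \<open>0 \<le> ln (real n)\<close> by (intro mult_right_mono) auto
  finally show ?thesis unfolding E_def .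
qed

theorem mainTheorem6:
  fixes pL1 pLinf :: "nat \<Rightarrow> real poly"
  assumes "\<And>n. is_best_L1 f_circ n (pL1 n)"
      and "\<And>n. is_best_Linf f_circ n (pLinf n)"
  shows "(\<lambda>n. measure lebesgue
            {x \<in> {-1..1}. \<bar>f_circ x - poly (pL1 n) x\<bar> \<ge> sup_dist f_circ (pLinf n) / 2})
         \<in> O(\<lambda>n. ln (real n) / (real n)\<^sup>2)"
proof (rule bigoI[where c = 17301504], rule eventually_at_top_linorderI[of 10])
  fix n :: nat assume n: "10 \<le> n"
  then have "0 \<le> ln (real n)" by simp
  then show "norm (measure lebesgue
            {x \<in> {-1..1}. \<bar>f_circ x - poly (pL1 n) x\<bar> \<ge> sup_dist f_circ (pLinf n) / 2})
        \<le> 17301504 * norm (ln (real n) / (real n)\<^sup>2)"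
    using measure_large_error_best_L1_le[OF assms(1,2) n] by simp
qed

end
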